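(* There exist absolute constants $C,\bar C$ such that for all $n\ge1$ and $d\ge C$, with $S_n^d=\sum_{\ell=1}^dP_n^\ell$ where $P_n^\ell(i,j)=\mathbf 1(\pi_n^\ell(i)=j)$ for independent uniformly random permutations $\pi_n^1,\dots,\pi_n^d$ of $[n]$: (i) $\mathbb P\big(\operatorname{Tr}S_n^d(S_n^d)^*\ge nd+xd^2\big)\le d\,e^{-d(x-e)}$ for all $x\ge e$; (ii) $\mathbb E\operatorname{Tr}\big(S_n^d(S_n^d)^*\big)^2\le 2nd^2+\bar Cd^4$. *)

theory Defs
  imports "HOL-Probability.Probability" "HOL-Combinatorics.Permutations"
begin

definition rand_perms :: "nat \<Rightarrow> nat \<Rightarrow> (nat \<Rightarrow> nat \<Rightarrow> nat) pmf" where
  "rand_perms n d = Pi_pmf {..<d} id (\<lambda>_. pmf_of_set {\<pi>. \<pi> permutes {..<n}})"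

definition Smat :: "nat \<Rightarrow> (nat \<Rightarrow> nat \<Rightarrow> nat) \<Rightarrow> nat \<Rightarrow> nat \<Rightarrow> real" where
  "Smat d \<pi> i j = (\<Sum>l<d. if \<pi> l i = j then 1 else 0)"

definition SSt :: "nat \<Rightarrow> nat \<Rightarrow> (nat \<Rightarrow> nat \<Rightarrow> nat) \<Rightarrow> nat \<Rightarrow> nat \<Rightarrow> real" where
  "SSt n d \<pi> i j = (\<Sum>k<n. Smat d \<pi> i k * Smat d \<pi> j k)"

definition tr1 :: "nat \<Rightarrow> nat \<Rightarrow> (nat \<Rightarrow> nat \<Rightarrow> nat) \<Rightarrow> real" where
  "tr1 n d \<pi> = (\<Sum>i<n. SSt n d \<pi> i i)"

definition tr2 :: "nat \<Rightarrow> nat \<Rightarrow> (nat \<Rightarrow> nat \<Rightarrow> nat) \<Rightarrow> real" where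
  "tr2 n d \<pi> = (\<Sum>i<n. \<Sum>j<n. SSt n d \<pi> i j * SSt n d \<pi> j i)"

end

(*
  Let a(\<sigma>, \<tau>) be the number of points at which two permutations of [n] agree. Then
  tr (S S^T) = n d + \<Sum>_{l \<noteq> l'} a(\<pi>_l, \<pi>_l'). For uniform \<sigma> and fixed \<tau>, the agreement count
  satisfies the Poisson(1) bound E exp (u a(\<sigma>, \<tau>)) \<le> exp (e^u - 1). Adding the permutations one
  at a time, and using convexity of exp for the agreements of the new permutation with the m
  previous ones, gives E exp (\<theta> \<Sum>_{l \<noteq> l'} a(\<pi>_l, \<pi>_l')) \<le> exp (\<Sum>_{m<d} (e^{2\<theta>m} - 1));
  \<theta> = 1/d and Markov's inequality yield (i).

  For (ii), tr ((S S^T)^2) is the sum over l1, l2, l3, l4 < d of the number of pairs (i, j) with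
  \<pi>_l1 i = \<pi>_l2 j and \<pi>_l3 i = \<pi>_l4 j. This count is at most n, which is only needed for the
  2 d^2 index patterns l1 = l2, l3 = l4 and l1 = l3, l2 = l4; in every other pattern, resampling a
  single permutation shows that its expectation is at most 2.
*)

theory Submission
  imports Defs
begin

section \<open>Uniform random permutations\<close>

abbreviation uniform_perm :: "nat \<Rightarrow> (nat \<Rightarrow> nat) pmf" where
  "uniform_perm n \<equiv> pmf_of_set {\<sigma>. \<sigma> permutes {..<n}}"

lemma permutations_lessThan_nonempty: "{\<sigma>. \<sigma> permutes {..<n}} \<noteq> {}"
  using permutes_id by blast

lemma set_pmf_uniform_perm [simp]: "set_pmf (uniform_perm n) = {\<sigma>. \<sigma> permutes {..<n}}"
  by (rule set_pmf_of_set[OF permutations_lessThan_nonempty finite_permutations]) simp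

lemma finite_set_pmf_uniform_perm: "finite (set_pmf (uniform_perm n))"
  by (simp add: finite_permutations)

lemma expectation_uniform_perm:
  fixes f :: "(nat \<Rightarrow> nat) \<Rightarrow> real"
  shows "measure_pmf.expectation (uniform_perm n) f = (\<Sum>\<sigma> | \<sigma> permutes {..<n}. f \<sigma>) / fact n"
  using permutations_lessThan_nonempty
  by (subst integral_pmf_of_set) (auto simp: finite_permutations card_permutations)

lemma permutes_lessThan_lt: "\<sigma> permutes {..<n} \<Longrightarrow> i < n \<Longrightarrow> \<sigma> i < n"
  using permutes_in_image[of \<sigma> "{..<n}" i] by simp

lemma sum_indicator_eq_card:
  "finite A \<Longrightarrow> (\<Sum>x\<in>A. if P x then 1 else 0 :: real) = real (card {x\<in>A. P x})"
  by (simp add: sum.If_cases Int_def)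

lemma card_permutes_agreeing_on:
  assumes \<tau>: "\<tau> permutes S" and "finite S" "K \<subseteq> S"
  shows "card {\<sigma>. \<sigma> permutes S \<and> (\<forall>i\<in>K. \<sigma> i = \<tau> i)} = fact (card S - card K)"
proof -
  have "{\<sigma>. \<sigma> permutes S \<and> (\<forall>i\<in>K. \<sigma> i = \<tau> i)} = (\<lambda>\<rho>. \<tau> \<circ> \<rho>) ` {\<rho>. \<rho> permutes (S - K)}"
  proof (intro equalityI subsetI)
    fix \<sigma> assume "\<sigma> \<in> {\<sigma>. \<sigma> permutes S \<and> (\<forall>i\<in>K. \<sigma> i = \<tau> i)}"
    then have \<sigma>: "\<sigma> permutes S" and agree: "\<forall>i\<in>K. \<sigma> i = \<tau> i" by auto
    have "inv \<tau> \<circ> \<sigma> permutes S" by (intro permutes_compose \<sigma> permutes_inv \<tau>)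
    then have "inv \<tau> \<circ> \<sigma> permutes (S - K)"
      using agree permutes_inverses(2)[OF \<tau>] by (auto simp: permutes_def)
    moreover have "\<sigma> = \<tau> \<circ> (inv \<tau> \<circ> \<sigma>)"
      using permutes_inverses(1)[OF \<tau>] by (auto simp: fun_eq_iff)
    ultimately show "\<sigma> \<in> (\<lambda>\<rho>. \<tau> \<circ> \<rho>) ` {\<rho>. \<rho> permutes (S - K)}" by blast
  next
    fix \<sigma> assume "\<sigma> \<in> (\<lambda>\<rho>. \<tau> \<circ> \<rho>) ` {\<rho>. \<rho> permutes (S - K)}"
    then obtain \<rho> where \<rho>: "\<rho> permutes (S - K)" and "\<sigma> = \<tau> \<circ> \<rho>" by auto
    then show "\<sigma> \<in> {\<sigma>. \<sigma> permutes S \<and> (\<forall>i\<in>K. \<sigma> i = \<tau> i)}"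
      using permutes_compose[OF permutes_subset[OF \<rho>] \<tau>] permutes_not_in[OF \<rho>] by auto
  qed
  moreover have "inj_on (\<lambda>\<rho>. \<tau> \<circ> \<rho>) {\<rho>. \<rho> permutes (S - K)}"
    using permutes_inj[OF \<tau>] by (intro inj_onI) (metis fun.inj_map_strong inj_eq)
  ultimately show ?thesis
    using assms by (simp add: card_image card_permutations card_Diff_subset finite_subset)
qed

lemma expectation_uniform_perm_maps_to:
  assumes "i < n" "v < n"
  shows "measure_pmf.expectation (uniform_perm n) (\<lambda>\<sigma>. if \<sigma> i = v then 1 else 0) = 1 / real n"
proof -
  have "Transposition.transpose i v permutes {..<n}"
    using assms by (intro permutes_swap_id) auto
  from card_permutes_agreeing_on[OF this, of "{i}"]
  have "card {\<sigma>. \<sigma> permutes {..<n} \<and> \<sigma> i = v} = fact (n - 1)"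
    using assms by simp
  moreover obtain m where "n = Suc m" using assms by (cases n) auto
  ultimately show ?thesis
    by (simp add: expectation_uniform_perm sum_indicator_eq_card finite_permutations)
qed

lemma expectation_uniform_perm_maps_two_to:
  assumes "i < n" "j < n" "u < n" "v < n" "i \<noteq> j" "u \<noteq> v"
  shows "measure_pmf.expectation (uniform_perm n) (\<lambda>\<sigma>. if \<sigma> j = u \<and> \<sigma> i = v then 1 else 0)
    = 1 / (real n * (real n - 1))"
proof -
  define j' where "j' = Transposition.transpose i v j"
  define \<tau> where "\<tau> = Transposition.transpose j' u \<circ> Transposition.transpose i v"
  have "j' < n" "j' \<noteq> v"
    using assms unfolding j'_def by (auto simp: Transposition.transpose_def)
  then have "\<tau> permutes {..<n}" "\<tau> i = v" "\<tau> j = u"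
    using assms unfolding \<tau>_def j'_def
    by (auto intro!: permutes_compose permutes_swap_id simp: Transposition.transpose_def)
  from card_permutes_agreeing_on[OF this(1), of "{i, j}"] this(2,3)
  have "card {\<sigma>. \<sigma> permutes {..<n} \<and> \<sigma> j = u \<and> \<sigma> i = v} = fact (n - 2)"
    using assms by (simp add: numeral_2_eq_2 conj_commute)
  moreover obtain m where "n = Suc (Suc m)" using assms by (cases n; cases "n - 1") auto
  ultimately show ?thesis
    by (simp add: expectation_uniform_perm sum_indicator_eq_card finite_permutations)
qed

lemma sum_Pow_by_card:
  fixes g :: "nat \<Rightarrow> real"
  assumes "finite A"
  shows "(\<Sum>K\<in>Pow A. g (card K)) = (\<Sum>k\<le>card A. real (card A choose k) * g k)"
proof -
  have "(\<Sum>K\<in>Pow A. g (card K)) = (\<Sum>k\<le>card A. \<Sum>K\<in>{K\<in>Pow A. card K = k}. g (card K))"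
    using assms by (intro sum.group[symmetric]) (auto intro: card_mono)
  also have "\<dots> = (\<Sum>k\<le>card A. real (card A choose k) * g k)"
  proof (intro sum.cong refl)
    fix k
    have "{K\<in>Pow A. card K = k} = {K. K \<subseteq> A \<and> card K = k}" by auto
    then show "(\<Sum>K\<in>{K\<in>Pow A. card K = k}. g (card K)) = real (card A choose k) * g k"
      using n_subsets[OF assms, of k] by (simp cong: sum.cong_simp)
  qed
  finally show ?thesis .
qed

lemma sum_power_div_fact_le_exp:
  fixes y :: real
  assumes "y \<ge> 0"
  shows "(\<Sum>k\<le>n. y ^ k / fact k) \<le> exp y"
proof -
  have "(\<lambda>k. y ^ k / fact k) sums exp y"
    using exp_converges[of y] by (simp add: divide_inverse mult.commute)
  then have "(\<Sum>k\<le>n. y ^ k / fact k) \<le> (\<Sum>k. y ^ k / fact k)"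
    using assms by (intro sum_le_suminf) (auto simp: sums_iff)
  with \<open>(\<lambda>k. y ^ k / fact k) sums exp y\<close> show ?thesis
    by (simp add: sums_iff)
qed

definition agreements :: "nat \<Rightarrow> (nat \<Rightarrow> nat) \<Rightarrow> (nat \<Rightarrow> nat) \<Rightarrow> real" where
  "agreements n \<sigma> \<tau> = real (card {i\<in>{..<n}. \<sigma> i = \<tau> i})"

lemma agreements_commute: "agreements n \<sigma> \<tau> = agreements n \<tau> \<sigma>"
  unfolding agreements_def by (simp add: eq_commute)

lemma agreements_self [simp]: "agreements n \<sigma> \<sigma> = real n"
  by (simp add: agreements_def)

text \<open>With \<open>y = exp u - 1\<close>, expand \<open>(1 + y) ^ a(\<sigma>, \<tau>)\<close> as a sum over the subsets \<open>K\<close> of the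
  agreement set. A fixed \<open>K\<close> lies in it for \<open>(n - card K)!\<close> of the \<open>n!\<close> permutations \<open>\<sigma>\<close>, so the
  expectation is \<open>\<Sum>\<^sub>k (n choose k) y\<^sup>k (n - k)! / n! = \<Sum>\<^sub>k\<^sub>\<le>\<^sub>n y\<^sup>k / k!\<close>.\<close>
lemma expectation_exp_agreements_le:
  assumes \<tau>: "\<tau> permutes {..<n}" and "u \<ge> 0"
  shows "measure_pmf.expectation (uniform_perm n) (\<lambda>\<sigma>. exp (u * agreements n \<tau> \<sigma>))
    \<le> exp (exp u - 1)"
proof -
  define y where "y = exp u - 1"
  have "y \<ge> 0" using \<open>u \<ge> 0\<close> by (simp add: y_def)
  let ?P = "{\<sigma>. \<sigma> permutes {..<n}}"
  have "(\<Sum>\<sigma>\<in>?P. exp (u * agreements n \<tau> \<sigma>))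
      = (\<Sum>\<sigma>\<in>?P. \<Sum>K\<in>Pow {..<n}. if \<forall>i\<in>K. \<sigma> i = \<tau> i then y ^ card K else 0)"
  proof (intro sum.cong refl)
    fix \<sigma>
    let ?A = "{i\<in>{..<n}. \<tau> i = \<sigma> i}"
    have "exp (u * agreements n \<tau> \<sigma>) = (\<Prod>i\<in>?A. y + 1)"
      by (simp add: agreements_def y_def exp_of_nat_mult[symmetric] mult.commute)
    also have "\<dots> = (\<Sum>K\<in>Pow ?A. y ^ card K)"
      by (subst prod_add) auto
    also have "Pow ?A = {K\<in>Pow {..<n}. \<forall>i\<in>K. \<sigma> i = \<tau> i}" by auto
    also have "(\<Sum>K\<in>\<dots>. y ^ card K)
        = (\<Sum>K\<in>Pow {..<n}. if \<forall>i\<in>K. \<sigma> i = \<tau> i then y ^ card K else 0)"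
      by (rule sum.inter_filter) simp
    finally show "exp (u * agreements n \<tau> \<sigma>)
        = (\<Sum>K\<in>Pow {..<n}. if \<forall>i\<in>K. \<sigma> i = \<tau> i then y ^ card K else 0)" .
  qed
  also have "\<dots> = (\<Sum>K\<in>Pow {..<n}. \<Sum>\<sigma>\<in>?P. if \<forall>i\<in>K. \<sigma> i = \<tau> i then y ^ card K else 0)"
    by (rule sum.swap)
  also have "\<dots> = (\<Sum>K\<in>Pow {..<n}. y ^ card K * fact (n - card K))"
  proof (intro sum.cong refl)
    fix K assume "K \<in> Pow {..<n}"
    then show "(\<Sum>\<sigma>\<in>?P. if \<forall>i\<in>K. \<sigma> i = \<tau> i then y ^ card K else 0) = y ^ card K * fact (n - card K)"
      using card_permutes_agreeing_on[OF \<tau>, of K]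
      by (simp add: sum.If_cases finite_permutations Int_def)
  qed
  also have "\<dots> = (\<Sum>k\<le>n. real (n choose k) * (y ^ k * fact (n - k)))"
    using sum_Pow_by_card[of "{..<n}" "\<lambda>k. y ^ k * fact (n - k)"] by simp
  also have "\<dots> = fact n * (\<Sum>k\<le>n. y ^ k / fact k)"
    unfolding sum_distrib_left by (intro sum.cong refl) (simp add: binomial_fact field_simps)
  finally show ?thesis
    using sum_power_div_fact_le_exp[OF \<open>y \<ge> 0\<close>, of n]
    by (simp add: expectation_uniform_perm y_def)
qed

section \<open>Products of independent permutations\<close>

lemma finite_set_pmf_Pi_pmf:
  assumes "finite A" "\<And>x. x \<in> A \<Longrightarrow> finite (set_pmf (p x))"
  shows "finite (set_pmf (Pi_pmf A dflt p))"
  unfolding set_Pi_pmf[OF assms(1)] dflt_image_PiE[symmetric]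
  using assms by (auto intro!: finite_PiE)

lemma expectation_pair_pmf:
  fixes f :: "'a \<times> 'b \<Rightarrow> real"
  assumes fin: "finite (set_pmf p)" "finite (set_pmf q)"
  shows "measure_pmf.expectation (pair_pmf p q) f
    = measure_pmf.expectation q (\<lambda>b. measure_pmf.expectation p (\<lambda>a. f (a, b)))"
proof -
  have "measure_pmf.expectation (pair_pmf p q) f
      = (\<Sum>x\<in>set_pmf p \<times> set_pmf q. pmf (pair_pmf p q) x *\<^sub>R f x)"
    using fin by (intro integral_measure_pmf) (auto simp: set_pair_pmf)
  also have "\<dots> = (\<Sum>a\<in>set_pmf p. \<Sum>b\<in>set_pmf q. pmf p a * pmf q b * f (a, b))"
    unfolding sum.cartesian_product by (intro sum.cong) (auto simp: pmf_pair)
  also have "\<dots> = (\<Sum>b\<in>set_pmf q. pmf q b * (\<Sum>a\<in>set_pmf p. pmf p a * f (a, b)))"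
    by (subst sum.swap) (simp add: sum_distrib_left mult_ac)
  also have "\<dots> = measure_pmf.expectation q (\<lambda>b. measure_pmf.expectation p (\<lambda>a. f (a, b)))"
    using fin by (simp add: integral_measure_pmf[of "set_pmf p"] integral_measure_pmf[of "set_pmf q"])
  finally show ?thesis .
qed

lemma expectation_Pi_pmf_resample:
  fixes f :: "('a \<Rightarrow> 'b) \<Rightarrow> real"
  assumes "finite A" "a \<in> A" "\<And>x. x \<in> A \<Longrightarrow> finite (set_pmf (p x))"
  shows "measure_pmf.expectation (Pi_pmf A dflt p) f
    = measure_pmf.expectation (Pi_pmf (A - {a}) dflt p)
        (\<lambda>g. measure_pmf.expectation (p a) (\<lambda>y. f (g(a := y))))"
proof -
  have "Pi_pmf A dflt p = map_pmf (\<lambda>(y, g). g(a := y)) (pair_pmf (p a) (Pi_pmf (A - {a}) dflt p))"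
    using assms Pi_pmf_insert[of "A - {a}" a dflt p] by (simp add: insert_absorb)
  moreover have "finite (set_pmf (Pi_pmf (A - {a}) dflt p))"
    using assms by (intro finite_set_pmf_Pi_pmf) auto
  ultimately show ?thesis
    using assms by (simp add: expectation_pair_pmf case_prod_unfold)
qed

lemma permutes_of_set_pmf_Pi_uniform_perm:
  assumes "g \<in> set_pmf (Pi_pmf A id (\<lambda>_. uniform_perm n))" "finite A" "l \<in> A"
  shows "g l permutes {..<n}"
  using assms by (simp add: set_Pi_pmf PiE_dflt_def)

lemma finite_set_pmf_rand_perms: "finite (set_pmf (rand_perms n d))"
  unfolding rand_perms_def by (intro finite_set_pmf_Pi_pmf finite_set_pmf_uniform_perm) auto

lemma permutes_of_set_pmf_rand_perms:
  "\<pi> \<in> set_pmf (rand_perms n d) \<Longrightarrow> l < d \<Longrightarrow> \<pi> l permutes {..<n}"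
  unfolding rand_perms_def by (erule permutes_of_set_pmf_Pi_uniform_perm) auto

lemma rand_perms_lessThan:
  "\<pi> \<in> set_pmf (rand_perms n d) \<Longrightarrow> l < d \<Longrightarrow> i < n \<Longrightarrow> \<pi> l i < n"
  by (simp add: permutes_lessThan_lt permutes_of_set_pmf_rand_perms)

lemma expectation_rand_perms_Suc:
  fixes f :: "(nat \<Rightarrow> nat \<Rightarrow> nat) \<Rightarrow> real"
  shows "measure_pmf.expectation (rand_perms n (Suc d)) f
    = measure_pmf.expectation (rand_perms n d)
        (\<lambda>g. measure_pmf.expectation (uniform_perm n) (\<lambda>y. f (g(d := y))))"
proof -
  have "{..<Suc d} - {d} = {..<d}" by auto
  then show ?thesis
    unfolding rand_perms_def
    by (subst expectation_Pi_pmf_resample[where a = d]) (auto simp: finite_permutations)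
qed

lemma expectation_rand_perms_le_by_resampling:
  fixes f :: "(nat \<Rightarrow> nat \<Rightarrow> nat) \<Rightarrow> real"
  assumes "a < d"
    and bound: "\<And>g. (\<And>l. l < d \<Longrightarrow> l \<noteq> a \<Longrightarrow> g l permutes {..<n})
      \<Longrightarrow> measure_pmf.expectation (uniform_perm n) (\<lambda>y. f (g(a := y))) \<le> B"
  shows "measure_pmf.expectation (rand_perms n d) f \<le> B"
proof -
  let ?Q = "Pi_pmf ({..<d} - {a}) id (\<lambda>_. uniform_perm n)"
  have "measure_pmf.expectation (rand_perms n d) f
      = measure_pmf.expectation ?Q (\<lambda>g. measure_pmf.expectation (uniform_perm n) (\<lambda>y. f (g(a := y))))"
    unfolding rand_perms_def using \<open>a < d\<close>
    by (intro expectation_Pi_pmf_resample) (auto simp: finite_permutations)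
  also have "\<dots> \<le> measure_pmf.expectation ?Q (\<lambda>_. B)"
    by (intro integral_mono_AE integrable_measure_pmf_finite finite_set_pmf_Pi_pmf)
       (auto simp: AE_measure_pmf_iff finite_permutations
         intro!: bound permutes_of_set_pmf_Pi_uniform_perm)
  finally show ?thesis by simp
qed

section \<open>The tail of \<open>tr (S S\<^sup>T)\<close>\<close>

lemma sum_Smat_mult_Smat:
  assumes "\<And>l. l < d \<Longrightarrow> \<pi> l i < n"
  shows "(\<Sum>k<n. Smat d \<pi> i k * Smat d \<pi> j k) = (\<Sum>l<d. \<Sum>l'<d. if \<pi> l i = \<pi> l' j then 1 else 0)"
proof -
  have "(\<Sum>k<n. Smat d \<pi> i k * Smat d \<pi> j k)
      = (\<Sum>l<d. \<Sum>l'<d. \<Sum>k<n. if k = \<pi> l i then (if \<pi> l' j = \<pi> l i then 1 else 0) else 0)"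
    unfolding Smat_def sum_product
    by (subst sum.swap, subst (2) sum.swap) (intro sum.cong refl, auto)
  also have "\<dots> = (\<Sum>l<d. \<Sum>l'<d. if \<pi> l i = \<pi> l' j then 1 else 0)"
    using assms by (intro sum.cong refl) auto
  finally show ?thesis .
qed

definition offdiag_agreements :: "nat \<Rightarrow> nat \<Rightarrow> (nat \<Rightarrow> nat \<Rightarrow> nat) \<Rightarrow> real" where
  "offdiag_agreements n d \<pi> = (\<Sum>l<d. \<Sum>l'<d. if l = l' then 0 else agreements n (\<pi> l) (\<pi> l'))"

lemma tr1_eq_offdiag_agreements:
  assumes "\<And>l i. l < d \<Longrightarrow> i < n \<Longrightarrow> \<pi> l i < n"
  shows "tr1 n d \<pi> = real n * real d + offdiag_agreements n d \<pi>"
proof -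
  have "tr1 n d \<pi> = (\<Sum>i<n. \<Sum>l<d. \<Sum>l'<d. if \<pi> l i = \<pi> l' i then 1 else 0)"
    unfolding tr1_def SSt_def using assms by (intro sum.cong refl sum_Smat_mult_Smat) auto
  also have "\<dots> = (\<Sum>l<d. \<Sum>l'<d. \<Sum>i<n. if \<pi> l i = \<pi> l' i then 1 else 0)"
    by (subst sum.swap) (simp add: sum.swap[of _ "{..<n}"])
  also have "\<dots> = (\<Sum>l<d. \<Sum>l'<d. agreements n (\<pi> l) (\<pi> l'))"
    by (simp add: agreements_def sum_indicator_eq_card)
  also have "\<dots> = (\<Sum>l<d. \<Sum>l'<d. (if l = l' then real n else 0)
      + (if l = l' then 0 else agreements n (\<pi> l) (\<pi> l')))"
    by (intro sum.cong refl) auto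
  also have "\<dots> = real n * real d + offdiag_agreements n d \<pi>"
    unfolding offdiag_agreements_def by (simp add: sum.distrib)
  finally show ?thesis .
qed

lemma offdiag_agreements_Suc:
  "offdiag_agreements n (Suc d) (g(d := y))
    = offdiag_agreements n d g + 2 * (\<Sum>l<d. agreements n (g l) y)"
  unfolding offdiag_agreements_def
  by (auto simp: sum.distrib agreements_commute[of n y] intro!: sum.cong)

text \<open>Jensen's inequality for \<open>exp\<close> reduces the agreements of a new permutation with \<open>d\<close>
  fixed ones to its agreements with a single one, at \<open>d\<close> times the parameter.\<close>
lemma expectation_exp_sum_agreements_le:
  assumes g: "\<And>l. l < d \<Longrightarrow> g l permutes {..<n}" and "\<theta> \<ge> 0"
  shows "measure_pmf.expectation (uniform_perm n) (\<lambda>y. exp (2 * \<theta> * (\<Sum>l<d. agreements n (g l) y)))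
    \<le> exp (exp (2 * \<theta> * real d) - 1)"
proof (cases "d = 0")
  case True
  then show ?thesis by simp
next
  case False
  let ?u = "2 * \<theta> * real d"
  have jensen: "exp (2 * \<theta> * (\<Sum>l<d. agreements n (g l) y))
      \<le> (\<Sum>l<d. exp (?u * agreements n (g l) y)) / real d" for y
  proof -
    have "exp (\<Sum>l<d. (1 / real d) *\<^sub>R (?u * agreements n (g l) y))
        \<le> (\<Sum>l<d. (1 / real d) * exp (?u * agreements n (g l) y))"
      using False by (intro convex_on_sum[OF _ _ exp_convex]) auto
    then show ?thesis
      using False by (simp add: sum_distrib_left sum_divide_distrib mult.assoc)
  qed
  have "measure_pmf.expectation (uniform_perm n) (\<lambda>y. exp (2 * \<theta> * (\<Sum>l<d. agreements n (g l) y)))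
      \<le> measure_pmf.expectation (uniform_perm n) (\<lambda>y. (\<Sum>l<d. exp (?u * agreements n (g l) y)) / real d)"
    by (intro integral_mono integrable_measure_pmf_finite finite_set_pmf_uniform_perm jensen)
  also have "\<dots> = (\<Sum>l<d. measure_pmf.expectation (uniform_perm n) (\<lambda>y. exp (?u * agreements n (g l) y))) / real d"
    unfolding integral_divide_zero
    by (subst Bochner_Integration.integral_sum) (auto intro!: integrable_measure_pmf_finite simp: finite_permutations)
  also have "\<dots> \<le> (\<Sum>l<d. exp (exp ?u - 1)) / real d"
    using g \<open>\<theta> \<ge> 0\<close>
    by (intro divide_right_mono sum_mono expectation_exp_agreements_le) auto
  also have "\<dots> = exp (exp ?u - 1)" using False by simp
  finally show ?thesis .
qed

lemma expectation_exp_offdiag_agreements_le: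
  assumes "\<theta> \<ge> 0"
  shows "measure_pmf.expectation (rand_perms n d) (\<lambda>\<pi>. exp (\<theta> * offdiag_agreements n d \<pi>))
    \<le> exp (\<Sum>m<d. exp (2 * \<theta> * real m) - 1)"
proof (induction d)
  case 0
  then show ?case by (simp add: offdiag_agreements_def)
next
  case (Suc d)
  let ?B = "exp (exp (2 * \<theta> * real d) - 1)"
  have new_row: "measure_pmf.expectation (uniform_perm n)
        (\<lambda>y. exp (\<theta> * offdiag_agreements n (Suc d) (g(d := y))))
      \<le> exp (\<theta> * offdiag_agreements n d g) * ?B" if "g \<in> set_pmf (rand_perms n d)" for g
  proof -
    have "(\<lambda>y. exp (\<theta> * offdiag_agreements n (Suc d) (g(d := y))))
        = (\<lambda>y. exp (\<theta> * offdiag_agreements n d g) * exp (2 * \<theta> * (\<Sum>l<d. agreements n (g l) y)))"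
      by (simp add: offdiag_agreements_Suc exp_add[symmetric] algebra_simps)
    then show ?thesis
      using permutes_of_set_pmf_rand_perms[OF that] assms
      by (simp add: expectation_exp_sum_agreements_le mult_left_mono)
  qed
  have "measure_pmf.expectation (rand_perms n (Suc d)) (\<lambda>\<pi>. exp (\<theta> * offdiag_agreements n (Suc d) \<pi>))
      \<le> measure_pmf.expectation (rand_perms n d) (\<lambda>g. exp (\<theta> * offdiag_agreements n d g) * ?B)"
    unfolding expectation_rand_perms_Suc
    by (intro integral_mono_AE integrable_measure_pmf_finite finite_set_pmf_rand_perms)
       (auto simp: AE_measure_pmf_iff intro: new_row)
  also have "\<dots> \<le> exp (\<Sum>m<d. exp (2 * \<theta> * real m) - 1) * ?B"
    using Suc.IH by simp
  also have "\<dots> = exp (\<Sum>m<Suc d. exp (2 * \<theta> * real m) - 1)"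
    by (simp add: exp_add)
  finally show ?case .
qed

lemma sum_exp_geometric_le:
  assumes "d \<ge> 1"
  shows "(\<Sum>m<d. exp (2 * (1 / real d) * real m) - 1) \<le> exp 1 * real d"
proof -
  define q where "q = exp (2 / real d)"
  have "real d > 0" using assms by simp
  then have "q > 1" "q ^ d = exp 2"
    unfolding q_def by (auto simp: exp_of_nat_mult[symmetric])
  have "q - 1 \<ge> 2 / real d"
    unfolding q_def using exp_ge_add_one_self[of "2 / real d"] by linarith
  have "(\<Sum>m<d. exp (2 * (1 / real d) * real m)) = (\<Sum>m<d. q ^ m)"
    unfolding q_def by (simp add: exp_of_nat_mult[symmetric] field_simps)
  also have "\<dots> = (q ^ d - 1) / (q - 1)"
    using \<open>q > 1\<close> by (simp add: sum_gp_strict field_simps)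
  also have "\<dots> \<le> (exp 2 - 1) / (2 / real d)"
    using \<open>q > 1\<close> \<open>q - 1 \<ge> 2 / real d\<close> \<open>q ^ d = exp 2\<close> \<open>real d > 0\<close> by (intro frac_le) auto
  finally have "(\<Sum>m<d. exp (2 * (1 / real d) * real m) - 1) \<le> ((exp 2 - 3) / 2) * real d"
    by (simp add: sum_subtractf field_simps)
  moreover have "(exp 2 - 3) / 2 \<le> (exp 1 :: real)"
  proof -
    have "(exp 1 - 3) * (exp 1 + 1) \<le> (0::real)"
      using exp_le by (intro mult_nonpos_nonneg) auto
    then show ?thesis
      by (simp add: exp_add[symmetric] algebra_simps flip: mult_2)
  qed
  ultimately show ?thesis
    using \<open>real d > 0\<close> by (meson mult_right_mono less_le order_trans)
qed

lemma tr1_tail_bound: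
  assumes "real d \<ge> 1" and "x \<ge> exp 1"
  shows "measure_pmf.prob (rand_perms n d) {\<pi>. tr1 n d \<pi> \<ge> real n * real d + x * (real d)^2}
    \<le> real d * exp (- real d * (x - exp 1))"
proof -
  let ?M = "rand_perms n d"
  let ?u = "\<lambda>\<pi>. exp (offdiag_agreements n d \<pi> / real d)"
  have "real d > 0" using assms by simp
  have "measure_pmf.prob ?M {\<pi>. tr1 n d \<pi> \<ge> real n * real d + x * (real d)^2}
      = measure_pmf.prob ?M {\<pi>. offdiag_agreements n d \<pi> \<ge> x * (real d)^2}"
  proof -
    have "tr1 n d \<pi> = real n * real d + offdiag_agreements n d \<pi>" if "\<pi> \<in> set_pmf ?M" for \<pi>
      by (rule tr1_eq_offdiag_agreements) (rule rand_perms_lessThan[OF that])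
    then show ?thesis
      by (intro measure_pmf.finite_measure_eq_AE) (auto simp: AE_measure_pmf_iff)
  qed
  also have "\<dots> = measure_pmf.prob ?M {\<pi> \<in> space ?M. ?u \<pi> \<ge> exp (x * real d)}"
    using \<open>real d > 0\<close> by (simp add: power2_eq_square field_simps)
  also have "\<dots> \<le> measure_pmf.expectation ?M ?u / exp (x * real d)"
    by (intro integral_Markov_inequality_measure integrable_measure_pmf_finite
          finite_set_pmf_rand_perms) auto
  also have "\<dots> \<le> exp (exp 1 * real d) / exp (x * real d)"
  proof (intro divide_right_mono)
    have "measure_pmf.expectation ?M ?u \<le> exp (\<Sum>m<d. exp (2 * (1 / real d) * real m) - 1)"
      using expectation_exp_offdiag_agreements_le[of "1 / real d" n d] by simp
    also have "\<dots> \<le> exp (exp 1 * real d)"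
      using sum_exp_geometric_le[of d] assms by simp
    finally show "measure_pmf.expectation ?M ?u \<le> exp (exp 1 * real d)" .
  qed simp
  also have "\<dots> = exp (- real d * (x - exp 1))"
    by (simp add: exp_diff[symmetric] algebra_simps)
  also have "\<dots> \<le> real d * exp (- real d * (x - exp 1))"
    using assms by simp
  finally show ?thesis .
qed

section \<open>The expectation of \<open>tr (S S\<^sup>T)\<^sup>2\<close>\<close>

definition collisions :: "nat \<Rightarrow> (nat \<Rightarrow> nat \<Rightarrow> nat) \<Rightarrow> nat \<Rightarrow> nat \<Rightarrow> nat \<Rightarrow> nat \<Rightarrow> real" where
  "collisions n \<pi> a b c e = (\<Sum>i<n. \<Sum>j<n. if \<pi> a i = \<pi> b j \<and> \<pi> c i = \<pi> e j then 1 else 0)"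

lemma collisions_swap_pair: "collisions n \<pi> a b c e = collisions n \<pi> b a e c"
  unfolding collisions_def by (subst sum.swap) (simp add: eq_commute conj_commute)

lemma collisions_swap_conditions: "collisions n \<pi> a b c e = collisions n \<pi> c e a b"
  unfolding collisions_def by (simp add: conj_commute)

lemma tr2_eq_sum_collisions:
  assumes "\<And>l i. l < d \<Longrightarrow> i < n \<Longrightarrow> \<pi> l i < n"
  shows "tr2 n d \<pi> = (\<Sum>a<d. \<Sum>c<d. \<Sum>b<d. \<Sum>e<d. collisions n \<pi> a b e c)"
proof -
  have "tr2 n d \<pi> = (\<Sum>i<n. \<Sum>j<n. (\<Sum>a<d. \<Sum>b<d. if \<pi> a i = \<pi> b j then 1 else 0)
      * (\<Sum>c<d. \<Sum>e<d. if \<pi> c j = \<pi> e i then 1 else 0))"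
    unfolding tr2_def SSt_def using assms by (simp add: sum_Smat_mult_Smat)
  also have "\<dots> = (\<Sum>i<n. \<Sum>j<n. \<Sum>a<d. \<Sum>c<d. \<Sum>b<d. \<Sum>e<d.
      if \<pi> a i = \<pi> b j \<and> \<pi> e i = \<pi> c j then 1 else 0)"
    unfolding sum_product by (intro sum.cong refl) auto
  also have "\<dots> = (\<Sum>a<d. \<Sum>c<d. \<Sum>b<d. \<Sum>e<d. collisions n \<pi> a b e c)"
    unfolding collisions_def by (simp add: sum.swap[of _ "{..<n}" "{..<d}"])
  finally show ?thesis .
qed

lemma sum_indicator_permutes_eq:
  fixes \<sigma> :: "nat \<Rightarrow> nat"
  assumes \<sigma>: "\<sigma> permutes {..<n}" and "v < n"
  shows "(\<Sum>j<n. if \<sigma> j = v then 1 else 0 :: real) = 1"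
proof -
  have "(\<Sum>j<n. if \<sigma> j = v then 1 else 0 :: real) = real (card {j\<in>{..<n}. \<sigma> j = v})"
    by (rule sum_indicator_eq_card) simp
  also have "{j\<in>{..<n}. \<sigma> j = v} = {inv \<sigma> v}"
    using assms permutes_inverses[OF \<sigma>] permutes_in_image[OF permutes_inv[OF \<sigma>]] by auto
  finally show ?thesis by simp
qed

lemma collisions_le_n:
  assumes "\<pi> a permutes {..<n}" "\<pi> b permutes {..<n}"
  shows "collisions n \<pi> a b c e \<le> real n"
proof -
  have "collisions n \<pi> a b c e \<le> (\<Sum>i<n. \<Sum>j<n. if \<pi> b j = \<pi> a i then 1 else 0)"
    unfolding collisions_def by (intro sum_mono) auto
  also have "\<dots> = (\<Sum>i<n. 1)"
    using assms by (intro sum.cong refl sum_indicator_permutes_eq) (auto simp: permutes_lessThan_lt)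
  finally show ?thesis by simp
qed

text \<open>Resampling the permutation \<open>\<pi> a\<close>, which occurs only once, each pair \<open>(i, j)\<close> with
  \<open>\<pi> c i = \<pi> e j\<close> collides with probability \<open>1 / n\<close>, and there are \<open>n\<close> such pairs.\<close>
lemma expectation_collisions_le_1:
  assumes "a < d" "b < d" "c < d" "e < d" and "a \<noteq> b" "a \<noteq> c" "a \<noteq> e"
  shows "measure_pmf.expectation (rand_perms n d) (\<lambda>\<pi>. collisions n \<pi> a b c e) \<le> 1"
proof (rule expectation_rand_perms_le_by_resampling[OF \<open>a < d\<close>])
  fix g assume g: "\<And>l. l < d \<Longrightarrow> l \<noteq> a \<Longrightarrow> g l permutes {..<n}"
  then have g_lt: "g l j < n" if "l < d" "l \<noteq> a" "j < n" for l j
    using that by (simp add: permutes_lessThan_lt)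
  have "measure_pmf.expectation (uniform_perm n) (\<lambda>y. collisions n (g(a := y)) a b c e)
      = measure_pmf.expectation (uniform_perm n)
          (\<lambda>y. \<Sum>i<n. \<Sum>j<n. (if g e j = g c i then 1 else 0) * (if y i = g b j then 1 else 0))"
    unfolding collisions_def using assms by (intro arg_cong2[where f = measure_pmf.expectation] ext sum.cong) auto
  also have "\<dots> = (\<Sum>i<n. \<Sum>j<n. (if g e j = g c i then 1 else 0)
      * measure_pmf.expectation (uniform_perm n) (\<lambda>y. if y i = g b j then 1 else 0))"
    by (simp add: integrable_measure_pmf_finite finite_permutations)
  also have "\<dots> = (\<Sum>i<n. \<Sum>j<n. (if g e j = g c i then 1 else 0) / real n)"
    using g_lt assms by (intro sum.cong refl) (auto simp: expectation_uniform_perm_maps_to)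
  also have "\<dots> = (\<Sum>i<n. 1 / real n)"
    using g g_lt assms
    by (intro sum.cong refl) (simp add: sum_indicator_permutes_eq flip: sum_divide_distrib)
  also have "\<dots> \<le> 1" by simp
  finally show "measure_pmf.expectation (uniform_perm n) (\<lambda>y. collisions n (g(a := y)) a b c e) \<le> 1" .
qed

text \<open>Resampling \<open>\<pi> b\<close>, a pair \<open>(i, j)\<close> collides with probability \<open>1 / n\<close> if \<open>i = j\<close>
  and \<open>1 / (n (n - 1))\<close> otherwise.\<close>
lemma expectation_collisions_transposed_le_2:
  assumes "a < d" "b < d" "a \<noteq> b"
  shows "measure_pmf.expectation (rand_perms n d) (\<lambda>\<pi>. collisions n \<pi> a b b a) \<le> 2"
proof (rule expectation_rand_perms_le_by_resampling[OF \<open>b < d\<close>])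
  fix g assume "\<And>l. l < d \<Longrightarrow> l \<noteq> b \<Longrightarrow> g l permutes {..<n}"
  then have ga: "g a permutes {..<n}" using assms by blast
  define h where "h i j = measure_pmf.expectation (uniform_perm n)
      (\<lambda>y. if y j = g a i \<and> y i = g a j then 1 else 0 :: real)" for i j
  have row: "(\<Sum>j<n. h i j) \<le> 2 / real n" if "i < n" for i
  proof -
    have "h i i = 1 / real n"
      unfolding h_def using that ga
      by (simp add: expectation_uniform_perm_maps_to permutes_lessThan_lt)
    moreover have "h i j = 1 / (real n * (real n - 1))" if "j \<in> {..<n} - {i}" for j
      unfolding h_def using that \<open>i < n\<close> ga
      by (intro expectation_uniform_perm_maps_two_to)
         (auto simp: permutes_lessThan_lt dest: permutes_inj[THEN injD])
    ultimately have "(\<Sum>j<n. h i j) = 1 / real n + real (n - 1) / (real n * (real n - 1))"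
      using that by (simp add: sum.remove[of _ i])
    also have "\<dots> \<le> 2 / real n"
    proof (cases "n = 1")
      case False
      with that have "real n > 1" by simp
      then show ?thesis by (simp add: of_nat_diff field_simps)
    qed simp
    finally show ?thesis .
  qed
  have "measure_pmf.expectation (uniform_perm n) (\<lambda>y. collisions n (g(b := y)) a b b a)
      = measure_pmf.expectation (uniform_perm n)
          (\<lambda>y. \<Sum>i<n. \<Sum>j<n. if y j = g a i \<and> y i = g a j then 1 else 0)"
    unfolding collisions_def using assms
    by (intro arg_cong2[where f = measure_pmf.expectation] ext sum.cong) auto
  also have "\<dots> = (\<Sum>i<n. \<Sum>j<n. h i j)"
    unfolding h_def by (simp add: integrable_measure_pmf_finite finite_permutations)
  also have "\<dots> \<le> (\<Sum>i<n. 2 / real n)"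
    using row by (intro sum_mono) auto
  also have "\<dots> \<le> 2" by simp
  finally show "measure_pmf.expectation (uniform_perm n) (\<lambda>y. collisions n (g(b := y)) a b b a) \<le> 2" .
qed

lemma expectation_collisions_le:
  assumes "a < d" "b < d" "c < d" "e < d"
  shows "measure_pmf.expectation (rand_perms n d) (\<lambda>\<pi>. collisions n \<pi> a b c e)
    \<le> (if a = b \<and> c = e then real n else 0) + (if a = c \<and> b = e then real n else 0) + 2"
proof (cases "(a = b \<and> c = e) \<or> (a = c \<and> b = e)")
  case True
  have "measure_pmf.expectation (rand_perms n d) (\<lambda>\<pi>. collisions n \<pi> a b c e)
      \<le> measure_pmf.expectation (rand_perms n d) (\<lambda>_. real n)"
    using assms
    by (intro integral_mono_AE integrable_measure_pmf_finite finite_set_pmf_rand_perms)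
       (auto simp: AE_measure_pmf_iff intro!: collisions_le_n permutes_of_set_pmf_rand_perms)
  with True show ?thesis by auto
next
  case False
  text \<open>Some index occurs exactly once, or the indices pair up as \<open>a = e \<noteq> b = c\<close>.\<close>
  then consider "a \<noteq> b" "a \<noteq> c" "a \<noteq> e" | "b \<noteq> a" "b \<noteq> c" "b \<noteq> e"
    | "c \<noteq> a" "c \<noteq> b" "c \<noteq> e" | "e \<noteq> a" "e \<noteq> b" "e \<noteq> c" | "a = e" "b = c" "a \<noteq> b"
    by blast
  then have "measure_pmf.expectation (rand_perms n d) (\<lambda>\<pi>. collisions n \<pi> a b c e) \<le> 2"
  proof cases
    case 1
    then show ?thesis using expectation_collisions_le_1[of a d b c e n] assms by simp
  next
    case 2
    then show ?thesis
      using expectation_collisions_le_1[of b d a e c n] assms by (simp add: collisions_swap_pair)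
  next
    case 3
    then show ?thesis
      using expectation_collisions_le_1[of c d e a b n] assms by (simp add: collisions_swap_conditions)
  next
    case 4
    have "collisions n \<pi> a b c e = collisions n \<pi> e c b a" for \<pi>
      by (metis collisions_swap_pair collisions_swap_conditions)
    then show ?thesis using expectation_collisions_le_1[of e d c b a n] assms 4 by simp
  next
    case 5
    then show ?thesis using expectation_collisions_transposed_le_2[of a d b n] assms by simp
  qed
  with False show ?thesis by auto
qed

lemma sum_sum_if_pair_eq:
  fixes x :: real and d :: nat
  assumes "a < d" "c < d"
  shows "(\<Sum>b<d. \<Sum>e<d. if a = b \<and> e = c then x else 0) = x"
    and "(\<Sum>b<d. \<Sum>e<d. if a = e \<and> b = c then x else 0) = x"
proof -
  have "(\<Sum>e<d. if a = b \<and> e = c then x else 0) = (if a = b then x else 0)" for b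
    using assms by (cases "a = b") simp_all
  then show "(\<Sum>b<d. \<Sum>e<d. if a = b \<and> e = c then x else 0) = x"
    using assms by simp
  have "(\<Sum>e<d. if a = e \<and> b = c then x else 0) = (if b = c then x else 0)" for b
    using assms by (cases "b = c") simp_all
  then show "(\<Sum>b<d. \<Sum>e<d. if a = e \<and> b = c then x else 0) = x"
    using assms by simp
qed

lemma expectation_tr2_le:
  "measure_pmf.expectation (rand_perms n d) (tr2 n d) \<le> 2 * real n * (real d)^2 + 2 * (real d)^4"
proof -
  let ?M = "rand_perms n d"
  have "measure_pmf.expectation ?M (tr2 n d)
      = measure_pmf.expectation ?M (\<lambda>\<pi>. \<Sum>a<d. \<Sum>c<d. \<Sum>b<d. \<Sum>e<d. collisions n \<pi> a b e c)"
  proof (intro integral_cong_AE)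
    show "AE \<pi> in ?M. tr2 n d \<pi> = (\<Sum>a<d. \<Sum>c<d. \<Sum>b<d. \<Sum>e<d. collisions n \<pi> a b e c)"
      unfolding AE_measure_pmf_iff
      by (blast intro: tr2_eq_sum_collisions dest: rand_perms_lessThan)
  qed auto
  also have "\<dots> = (\<Sum>a<d. \<Sum>c<d. \<Sum>b<d. \<Sum>e<d. measure_pmf.expectation ?M (\<lambda>\<pi>. collisions n \<pi> a b e c))"
    by (simp add: integrable_measure_pmf_finite finite_set_pmf_rand_perms)
  also have "\<dots> \<le> (\<Sum>a<d. \<Sum>c<d. \<Sum>b<d. \<Sum>e<d.
      (if a = b \<and> e = c then real n else 0) + (if a = e \<and> b = c then real n else 0) + 2)"
    by (intro sum_mono expectation_collisions_le) auto
  also have "\<dots> = 2 * real n * (real d)^2 + 2 * (real d)^4"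
    by (simp add: sum.distrib sum_sum_if_pair_eq power2_eq_square power4_eq_xxxx algebra_simps)
  finally show ?thesis .
qed

theorem lemma5p2:
  shows "\<exists>C Cbar :: real. \<forall>n d :: nat. n \<ge> 1 \<and> real d \<ge> C \<longrightarrow>
     (\<forall>x::real. x \<ge> exp 1 \<longrightarrow>
        measure_pmf.prob (rand_perms n d)
          {\<pi>. tr1 n d \<pi> \<ge> real n * real d + x * (real d)^2}
        \<le> real d * exp (- real d * (x - exp 1)))
     \<and> measure_pmf.expectation (rand_perms n d) (tr2 n d)
        \<le> 2 * real n * (real d)^2 + Cbar * (real d)^4"
  by (intro exI[of _ 1] exI[of _ 2] allI impI conjI tr1_tail_bound expectation_tr2_le) auto

end
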